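(* Consider $\mathrm{USD}_p$ with $p\in[0,1]$, let $c_s>0$ be a constant, and let $\mathbf{x}(t_0)$ be a configuration at time $t_0$ with negative weighted bias $\Delta_{\bar{w}}(t_0) \geq c_s n$. Then, with probability at least $1-n^{-6}$, it holds that $\Delta_{\bar{w}}(t) \geq \Delta_{\bar{w}}(t_0)/2$ for all $t \in [t_0,t_0+\tau]$ for every $\tau \leq \Delta_{\bar{w}}^2(t_0)/(16\ln n)$.
   Context: Population protocol with $n$ agents, each in a state from $\{1,2,\bot\}$ (Opinion 1, Opinion 2, undecided). At each time step a scheduler picks an ordered pair $(i,j)$ of agents uniformly at random, independently of the past; only the initiator $i$ changes state. In $\mathrm{USD}_p$: if the initiator is $2$ and the responder $1$, the initiator becomes $\bot$; if the initiator is $1$ and the responder $2$, the initiator becomes $\bot$ with probability $1-p$ and otherwise stays $1$; if the initiator is $\bot$, it adopts the responder's state; otherwise nothing changes. $x_1(t),x_2(t),u(t)$ are the numbers of agents in states $1,2,\bot$ after $t$ interactions. The negative weighted bias is $\Delta_{\bar{w}}(t) := (1-p)x_2(t) - x_1(t)$. *)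

theory Defs
  imports "HOL-Probability.Probability"
begin

datatype opinion = Op1 | Op2 | Undec

text \<open>A configuration assigns a state to every agent; only agents 0..n-1 matter.\<close>
type_synonym config = "nat \<Rightarrow> opinion"

definition interact :: "real \<Rightarrow> opinion \<Rightarrow> opinion \<Rightarrow> opinion pmf" where
  "interact p a b =
     (if a = Op2 \<and> b = Op1 then return_pmf Undec
      else if a = Op1 \<and> b = Op2 then
        map_pmf (\<lambda>stay. if stay then Op1 else Undec) (bernoulli_pmf p)
      else if a = Undec then return_pmf b
      else return_pmf a)"

definition step :: "nat \<Rightarrow> real \<Rightarrow> config \<Rightarrow> config pmf" where
  "step n p c =
     pmf_of_set {(i, j). i < n \<and> j < n \<and> i \<noteq> j} \<bind>
       (\<lambda>(i, j). map_pmf (\<lambda>s. c(i := s)) (interact p (c i) (c j)))"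

text \<open>Distribution of the trajectory [x(0), x(1), ..., x(k)] of the first k interactions
  started from configuration c.\<close>
fun traj :: "nat \<Rightarrow> real \<Rightarrow> config \<Rightarrow> nat \<Rightarrow> config list pmf" where
  "traj n p c 0 = return_pmf [c]"
| "traj n p c (Suc k) =
     traj n p c k \<bind> (\<lambda>xs. map_pmf (\<lambda>c'. xs @ [c']) (step n p (last xs)))"

definition cnt :: "nat \<Rightarrow> opinion \<Rightarrow> config \<Rightarrow> nat" where
  "cnt n s c = card {i. i < n \<and> c i = s}"

definition neg_wbias :: "nat \<Rightarrow> real \<Rightarrow> config \<Rightarrow> real" where
  "neg_wbias n p c = (1 - p) * real (cnt n Op2 c) - real (cnt n Op1 c)"

end

theory Submission
  imports Defs "HOL-Real_Asymp.Real_Asymp"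
begin

(* Give an agent the weight l if it holds opinion 1, -l(1-p) if it holds opinion 2 and -m if it
  is undecided, so that the total weight is -l Delta - m u, where Delta is the negative weighted
  bias and u the number of undecided agents. In one interaction the expected factor by which
  the potential exp(-l Delta - m u) changes is 1 plus a combination of x1 x2 (encounters of the
  two opinions) and of u x1, u x2 (undecided agents adopting an opinion). Expanding exp to second
  order, the first coefficient is nonpositive for m = 5 l^2 and the second one as long as
  Delta >= 9 l (x1 + x2), so the potential is a supermartingale while Delta >= 9 l n.
  Freezing it at a lower bound of its values on {Delta < Delta(t0)/2} once Delta drops below
  Delta(t0)/2 and applying Markov's inequality bounds the failure probability by
  exp(-l Delta(t0)/2 + m n) <= exp(-(l c_s/2 - 5 l^2) n), which is below n^-6 for large n when
  l = min(1/5, c_s/18). *)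

lemma exp_le_one_plus_plus_square:
  fixes y :: real
  assumes "\<bar>y\<bar> \<le> 1"
  shows "exp y \<le> 1 + y + y\<^sup>2"
proof (cases "y \<ge> 0")
  case True
  then show ?thesis using exp_bound assms by auto
next
  case False
  define t where "t = -y"
  have t: "t > 0" using False by (simp add: t_def)
  have "exp y = 1 / exp t" by (simp add: t_def exp_minus field_simps)
  also have "\<dots> \<le> 1 / (1 + t)" using exp_ge_add_one_self[of t] t by (intro divide_left_mono) auto
  also have "\<dots> \<le> 1 - t + t\<^sup>2" using t by (simp add: field_simps power2_eq_square)
  finally show ?thesis by (simp add: t_def)
qed

lemma decided_drift_nonpos:
  fixes q l :: real
  assumes q: "0 \<le> q" "q \<le> 1" and l: "0 < l" "l \<le> 1/5"
  shows "(exp (l*q - 5*l\<^sup>2) - 1) + q * (exp (- (5*l\<^sup>2) - l) - 1) \<le> 0"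
proof -
  have m: "0 \<le> 5*l\<^sup>2" "5*l\<^sup>2 \<le> l" using l by (auto simp: power2_eq_square)
  have lq: "0 \<le> l*q" "l*q \<le> l" using q l by (auto simp: mult_left_le)
  have a1: "\<bar>l*q - 5*l\<^sup>2\<bar> \<le> l" and a2: "\<bar>- (5*l\<^sup>2) - l\<bar> \<le> 2*l"
    using m lq unfolding abs_le_iff by (intro conjI; linarith)+
  have "exp (l*q - 5*l\<^sup>2) \<le> 1 + (l*q - 5*l\<^sup>2) + (l*q - 5*l\<^sup>2)\<^sup>2"
    using a1 l by (intro exp_le_one_plus_plus_square) auto
  moreover have "(l*q - 5*l\<^sup>2)\<^sup>2 \<le> l\<^sup>2"
    using a1 l by (simp add: abs_le_square_iff[symmetric])
  ultimately have e1: "exp (l*q - 5*l\<^sup>2) - 1 \<le> l*q - 4*l\<^sup>2" by linarith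
  have "exp (- (5*l\<^sup>2) - l) \<le> 1 + (- (5*l\<^sup>2) - l) + (- (5*l\<^sup>2) - l)\<^sup>2"
    using a2 l by (intro exp_le_one_plus_plus_square) auto
  moreover have "(- (5*l\<^sup>2) - l)\<^sup>2 \<le> 4*l\<^sup>2"
    using a2 l abs_le_square_iff[of "- (5*l\<^sup>2) - l" "2*l"] by simp
  ultimately have "exp (- (5*l\<^sup>2) - l) - 1 \<le> - l - l\<^sup>2" by linarith
  then have "q * (exp (- (5*l\<^sup>2) - l) - 1) \<le> q * (- l - l\<^sup>2)"
    using q(1) by (rule mult_left_mono)
  also have "\<dots> = - (l*q) - q*l\<^sup>2" by (simp add: algebra_simps)
  finally show ?thesis
    using e1 mult_nonneg_nonneg[OF q(1) zero_le_power2[of l]] zero_le_power2[of l] by linarith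
qed

lemma undecided_drift_nonpos:
  fixes q l x1 x2 :: real
  assumes q: "0 \<le> q" "q \<le> 1" and l: "0 < l" "l \<le> 1/5"
    and x: "0 \<le> x1" "0 \<le> x2" and bias: "9 * l * (x1 + x2) \<le> q * x2 - x1"
  shows "x1 * (exp (l + 5*l\<^sup>2) - 1) + x2 * (exp (5*l\<^sup>2 - l*q) - 1) \<le> 0"
proof -
  have m: "0 \<le> 5*l\<^sup>2" "5*l\<^sup>2 \<le> l" using l by (auto simp: power2_eq_square)
  have lq: "0 \<le> l*q" "l*q \<le> l" using q l by (auto simp: mult_left_le)
  have a1: "\<bar>l + 5*l\<^sup>2\<bar> \<le> 2*l" and a2: "\<bar>5*l\<^sup>2 - l*q\<bar> \<le> l"
    using m lq unfolding abs_le_iff by (intro conjI; linarith)+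
  have "exp (l + 5*l\<^sup>2) \<le> 1 + (l + 5*l\<^sup>2) + (l + 5*l\<^sup>2)\<^sup>2"
    using a1 l by (intro exp_le_one_plus_plus_square) auto
  moreover have "(l + 5*l\<^sup>2)\<^sup>2 \<le> 4*l\<^sup>2"
    using a1 l abs_le_square_iff[of "l + 5*l\<^sup>2" "2*l"] by simp
  ultimately have "exp (l + 5*l\<^sup>2) - 1 \<le> l + 9*l\<^sup>2" by linarith
  then have e1: "x1 * (exp (l + 5*l\<^sup>2) - 1) \<le> x1 * (l + 9*l\<^sup>2)"
    using x(1) by (rule mult_left_mono)
  have "exp (5*l\<^sup>2 - l*q) \<le> 1 + (5*l\<^sup>2 - l*q) + (5*l\<^sup>2 - l*q)\<^sup>2"
    using a2 l by (intro exp_le_one_plus_plus_square) auto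
  moreover have "(5*l\<^sup>2 - l*q)\<^sup>2 \<le> l\<^sup>2"
    using a2 l by (simp add: abs_le_square_iff[symmetric])
  ultimately have "exp (5*l\<^sup>2 - l*q) - 1 \<le> 9*l\<^sup>2 - l*q"
    using zero_le_power2[of l] by linarith
  then have e2: "x2 * (exp (5*l\<^sup>2 - l*q) - 1) \<le> x2 * (9*l\<^sup>2 - l*q)"
    using x(2) by (rule mult_left_mono)
  have "x1 * (l + 9*l\<^sup>2) + x2 * (9*l\<^sup>2 - l*q) = l * (9 * l * (x1 + x2) - (q * x2 - x1))"
    by (simp add: algebra_simps power2_eq_square)
  also have "\<dots> \<le> 0" using l bias by (simp add: mult_nonneg_nonpos)
  finally show ?thesis using e1 e2 by linarith
qed

fun chain_path :: "('a \<Rightarrow> 'a pmf) \<Rightarrow> 'a \<Rightarrow> nat \<Rightarrow> 'a list pmf" where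
  "chain_path K x 0 = return_pmf [x]"
| "chain_path K x (Suc k) = chain_path K x k \<bind> (\<lambda>xs. map_pmf (\<lambda>y. xs @ [y]) (K (last xs)))"

lemma length_chain_path: "xs \<in> set_pmf (chain_path K x k) \<Longrightarrow> length xs = Suc k"
  by (induction k arbitrary: xs) (auto simp: set_bind_pmf)

lemma finite_set_pmf_chain_path:
  "(\<And>y. finite (set_pmf (K y))) \<Longrightarrow> finite (set_pmf (chain_path K x k))"
  by (induction k) (auto simp: set_bind_pmf)

lemma expectation_chain_path_Suc:
  fixes f :: "'a list \<Rightarrow> real"
  assumes fin: "\<And>y. finite (set_pmf (K y))"
  shows "measure_pmf.expectation (chain_path K x (Suc k)) f =
    measure_pmf.expectation (chain_path K x k)
      (\<lambda>xs. measure_pmf.expectation (K (last xs)) (\<lambda>y. f (xs @ [y])))"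
proof -
  let ?M = "chain_path K x k"
  have "measure_pmf.expectation (chain_path K x (Suc k)) f = (\<Sum>xs\<in>set_pmf ?M.
      pmf ?M xs *\<^sub>R measure_pmf.expectation (map_pmf (\<lambda>y. xs @ [y]) (K (last xs))) f)"
    unfolding chain_path.simps using fin finite_set_pmf_chain_path[of K x k, OF fin]
    by (intro pmf_expectation_bind) auto
  also have "\<dots> = measure_pmf.expectation ?M
      (\<lambda>xs. measure_pmf.expectation (K (last xs)) (\<lambda>y. f (xs @ [y])))"
    using finite_set_pmf_chain_path[of K x k, OF fin]
    by (subst integral_measure_pmf[of "set_pmf ?M"]) auto
  finally show ?thesis .
qed

(* Once the path has left G, the potential is frozen at its lower bound B outside G: it stays a
  supermartingale and equals B on the event that G has been left. *)
definition stopped_potential :: "('a \<Rightarrow> bool) \<Rightarrow> ('a \<Rightarrow> real) \<Rightarrow> real \<Rightarrow> 'a list \<Rightarrow> real" where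
  "stopped_potential G \<Phi> B xs = (if \<forall>y\<in>set xs. G y then \<Phi> (last xs) else B)"

context
  fixes K :: "'a \<Rightarrow> 'a pmf" and G :: "'a \<Rightarrow> bool" and \<Phi> :: "'a \<Rightarrow> real" and B :: real
  assumes finite_support: "\<And>y. finite (set_pmf (K y))"
    and supermartingale: "\<And>y. G y \<Longrightarrow> measure_pmf.expectation (K y) \<Phi> \<le> \<Phi> y"
    and lower_bound: "\<And>y. \<not> G y \<Longrightarrow> B \<le> \<Phi> y"
begin

lemma expectation_stopped_potential_snoc_le:
  assumes "xs \<noteq> []"
  shows "measure_pmf.expectation (K (last xs)) (\<lambda>y. stopped_potential G \<Phi> B (xs @ [y]))
    \<le> stopped_potential G \<Phi> B xs"
proof (cases "\<forall>y\<in>set xs. G y")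
  case True
  have "measure_pmf.expectation (K (last xs)) (\<lambda>y. stopped_potential G \<Phi> B (xs @ [y]))
      \<le> measure_pmf.expectation (K (last xs)) \<Phi>"
    using True lower_bound
    by (intro integral_mono integrable_measure_pmf_finite finite_support)
      (auto simp: stopped_potential_def)
  also have "\<dots> \<le> \<Phi> (last xs)"
    using True assms by (intro supermartingale) simp
  finally show ?thesis using True by (simp add: stopped_potential_def)
next
  case False
  then have "(\<lambda>y. stopped_potential G \<Phi> B (xs @ [y])) = (\<lambda>_. B)"
    by (intro ext) (auto simp: stopped_potential_def)
  moreover have "stopped_potential G \<Phi> B xs = B"
    using False by (auto simp: stopped_potential_def)
  ultimately show ?thesis by simp
qed

lemma expectation_stopped_potential_le:
  "measure_pmf.expectation (chain_path K x k) (stopped_potential G \<Phi> B) \<le> \<Phi> x"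
proof (induction k)
  case 0
  then show ?case using lower_bound[of x] by (simp add: stopped_potential_def)
next
  case (Suc k)
  have "measure_pmf.expectation (chain_path K x (Suc k)) (stopped_potential G \<Phi> B)
      = measure_pmf.expectation (chain_path K x k)
          (\<lambda>xs. measure_pmf.expectation (K (last xs)) (\<lambda>y. stopped_potential G \<Phi> B (xs @ [y])))"
    using finite_support by (rule expectation_chain_path_Suc)
  also have "\<dots> \<le> measure_pmf.expectation (chain_path K x k) (stopped_potential G \<Phi> B)"
    using finite_set_pmf_chain_path[of K x k, OF finite_support]
    by (intro integral_mono_AE integrable_measure_pmf_finite)
      (auto simp: AE_measure_pmf_iff intro!: expectation_stopped_potential_snoc_le
        dest!: length_chain_path)
  finally show ?case using Suc.IH by linarith
qed

lemma prob_chain_path_stays_ge: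
  assumes nonneg: "\<And>y. 0 \<le> \<Phi> y" and B: "0 < B"
  shows "1 - \<Phi> x / B \<le> measure_pmf.prob (chain_path K x k) {xs. \<forall>t\<le>k. G (xs ! t)}"
proof -
  let ?M = "chain_path K x k"
  define exits where "exits = {xs. \<exists>y\<in>set xs. \<not> G y}"
  have "B * measure_pmf.prob ?M exits = measure_pmf.expectation ?M (\<lambda>xs. B * indicator exits xs)"
    by simp
  also have "\<dots> \<le> measure_pmf.expectation ?M (stopped_potential G \<Phi> B)"
    using finite_set_pmf_chain_path[of K x k, OF finite_support] nonneg
    by (intro integral_mono_AE integrable_measure_pmf_finite)
      (auto simp: AE_measure_pmf_iff exits_def stopped_potential_def indicator_def)
  also have "\<dots> \<le> \<Phi> x" by (rule expectation_stopped_potential_le)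
  finally have "measure_pmf.prob ?M exits \<le> \<Phi> x / B" using B by (simp add: field_simps)
  moreover have "measure_pmf.prob ?M {xs. \<forall>t\<le>k. G (xs ! t)} = measure_pmf.prob ?M (UNIV - exits)"
  proof -
    have "(\<forall>t\<le>k. G (xs ! t)) \<longleftrightarrow> xs \<notin> exits" if "xs \<in> set_pmf ?M" for xs
      using length_chain_path[OF that] by (auto simp: exits_def all_set_conv_all_nth less_Suc_eq_le)
    then show ?thesis by (intro measure_prob_cong_0) (auto simp: set_pmf_eq)
  qed
  ultimately show ?thesis using measure_pmf.prob_compl[of exits ?M] by simp
qed

end

lemma cnt_Suc: "cnt (Suc n) s c = cnt n s c + (if c n = s then 1 else 0)"
proof -
  have "{i. i < Suc n \<and> c i = s} = {i. i < n \<and> c i = s} \<union> (if c n = s then {n} else {})"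
    by (auto simp: less_Suc_eq)
  then show ?thesis by (simp add: cnt_def)
qed

lemma sum_agents_by_state:
  fixes f :: "opinion \<Rightarrow> real"
  shows "(\<Sum>i<n. f (c i)) =
    real (cnt n Op1 c) * f Op1 + real (cnt n Op2 c) * f Op2 + real (cnt n Undec c) * f Undec"
proof (induction n)
  case 0
  then show ?case by (simp add: cnt_def)
next
  case (Suc n)
  then show ?case by (cases "c n") (simp_all add: cnt_Suc algebra_simps)
qed

lemma cnt_sum: "real (cnt n Op1 c) + real (cnt n Op2 c) + real (cnt n Undec c) = real n"
  using sum_agents_by_state[where f = "\<lambda>_. 1"] by simp

lemma cnt_le: "cnt n s c \<le> n"
  unfolding cnt_def by (rule card_mono[of "{..<n}", simplified]) auto

fun usd_weight :: "real \<Rightarrow> real \<Rightarrow> real \<Rightarrow> opinion \<Rightarrow> real" where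
  "usd_weight l m p Op1 = l"
| "usd_weight l m p Op2 = - (l * (1 - p))"
| "usd_weight l m p Undec = - m"

definition log_potential :: "nat \<Rightarrow> real \<Rightarrow> real \<Rightarrow> real \<Rightarrow> config \<Rightarrow> real" where
  "log_potential n l m p c = (\<Sum>i<n. usd_weight l m p (c i))"

lemma log_potential_eq:
  "log_potential n l m p c = - l * neg_wbias n p c - m * real (cnt n Undec c)"
  unfolding log_potential_def sum_agents_by_state by (simp add: neg_wbias_def algebra_simps)

lemma log_potential_fun_upd:
  assumes "i < n"
  shows "log_potential n l m p (c(i := s)) =
    log_potential n l m p c - usd_weight l m p (c i) + usd_weight l m p s"
proof -
  have "log_potential n l m p (c(i := s)) = (\<Sum>k<n. usd_weight l m p (c k)
      + (if k = i then usd_weight l m p s - usd_weight l m p (c i) else 0))"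
    unfolding log_potential_def by (intro sum.cong) auto
  then show ?thesis using assms by (simp add: sum.distrib log_potential_def)
qed

definition agent_pairs :: "nat \<Rightarrow> (nat \<times> nat) set" where
  "agent_pairs n = {(i, j). i < n \<and> j < n \<and> i \<noteq> j}"

lemma finite_agent_pairs: "finite (agent_pairs n)"
  by (rule finite_subset[of _ "{..<n} \<times> {..<n}"]) (auto simp: agent_pairs_def)

lemma agent_pairs_nonempty:
  assumes "2 \<le> n"
  shows "agent_pairs n \<noteq> {}"
proof -
  have "(0, 1) \<in> agent_pairs n" using assms by (simp add: agent_pairs_def)
  then show ?thesis by blast
qed

lemma sum_agent_pairs:
  fixes g :: "nat \<Rightarrow> nat \<Rightarrow> 'a::comm_monoid_add"
  assumes "\<And>i. g i i = 0"
  shows "(\<Sum>(i, j)\<in>agent_pairs n. g i j) = (\<Sum>i<n. \<Sum>j<n. g i j)"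
proof -
  have "(\<Sum>i<n. \<Sum>j<n. g i j) = (\<Sum>(i, j)\<in>{..<n} \<times> {..<n}. g i j)"
    by (simp add: sum.cartesian_product)
  also have "\<dots> = (\<Sum>(i, j)\<in>agent_pairs n. g i j)"
    by (rule sum.mono_neutral_right) (auto simp: agent_pairs_def assms)
  finally show ?thesis by simp
qed

lemma sum_agent_pairs_by_state:
  fixes h :: "opinion \<Rightarrow> opinion \<Rightarrow> real"
  assumes "\<And>a. h a a = 0" and "h Op1 Undec = 0" and "h Op2 Undec = 0"
  shows "(\<Sum>(i, j)\<in>agent_pairs n. h (c i) (c j)) =
    real (cnt n Op1 c) * real (cnt n Op2 c) * (h Op2 Op1 + h Op1 Op2)
    + real (cnt n Undec c) * (real (cnt n Op1 c) * h Undec Op1 + real (cnt n Op2 c) * h Undec Op2)"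
proof -
  define x1 x2 u where "x1 = real (cnt n Op1 c)" and "x2 = real (cnt n Op2 c)"
    and "u = real (cnt n Undec c)"
  have "(\<Sum>(i, j)\<in>agent_pairs n. h (c i) (c j)) = (\<Sum>i<n. \<Sum>j<n. h (c i) (c j))"
    using assms(1) by (rule sum_agent_pairs)
  also have "\<dots> = (\<Sum>i<n. x1 * h (c i) Op1 + x2 * h (c i) Op2 + u * h (c i) Undec)"
    unfolding x1_def x2_def u_def by (simp add: sum_agents_by_state algebra_simps)
  also have "\<dots> = x1 * (x1 * h Op1 Op1 + x2 * h Op1 Op2 + u * h Op1 Undec)
      + x2 * (x1 * h Op2 Op1 + x2 * h Op2 Op2 + u * h Op2 Undec)
      + u * (x1 * h Undec Op1 + x2 * h Undec Op2 + u * h Undec Undec)"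
    unfolding sum_agents_by_state[where f = "\<lambda>a. x1 * h a Op1 + x2 * h a Op2 + u * h a Undec"]
    by (simp add: x1_def x2_def u_def algebra_simps)
  finally show ?thesis by (simp add: assms x1_def x2_def u_def algebra_simps)
qed

definition interaction_factor :: "real \<Rightarrow> real \<Rightarrow> real \<Rightarrow> opinion \<Rightarrow> opinion \<Rightarrow> real" where
  "interaction_factor l m p a b =
     measure_pmf.expectation (interact p a b) (\<lambda>s. exp (usd_weight l m p s - usd_weight l m p a))"

lemma sum_agent_pairs_interaction_factor:
  assumes "0 \<le> p" "p \<le> 1"
  shows "(\<Sum>(i, j)\<in>agent_pairs n. interaction_factor l m p (c i) (c j) - 1) =
    real (cnt n Op1 c) * real (cnt n Op2 c)
      * ((exp (l * (1 - p) - m) - 1) + (1 - p) * (exp (- m - l) - 1))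
    + real (cnt n Undec c) * (real (cnt n Op1 c) * (exp (l + m) - 1)
      + real (cnt n Op2 c) * (exp (m - l * (1 - p)) - 1))"
proof -
  have "interaction_factor l m p a a = 1" for a
    by (cases a) (simp_all add: interaction_factor_def interact_def)
  then show ?thesis
    using assms by (subst sum_agent_pairs_by_state)
      (simp_all add: interaction_factor_def interact_def algebra_simps)
qed

lemma finite_set_pmf_interact: "finite (set_pmf (interact p a b))"
  by (simp add: interact_def)

lemma finite_set_pmf_step:
  assumes "2 \<le> n"
  shows "finite (set_pmf (step n p c))"
  unfolding step_def agent_pairs_def[symmetric]
  using finite_agent_pairs agent_pairs_nonempty[OF assms]
  by (auto simp: set_bind_pmf finite_set_pmf_interact split: prod.splits)

lemma expectation_step_exp_log_potential:
  assumes "2 \<le> n"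
  shows "measure_pmf.expectation (step n p c) (\<lambda>c'. exp (log_potential n l m p c')) =
    exp (log_potential n l m p c)
      * (\<Sum>(i, j)\<in>agent_pairs n. interaction_factor l m p (c i) (c j)) / real (card (agent_pairs n))"
proof -
  have factor: "measure_pmf.expectation (interact p (c i) (c j))
      (\<lambda>s. exp (log_potential n l m p (c(i := s))))
    = exp (log_potential n l m p c) * interaction_factor l m p (c i) (c j)"
    if "(i, j) \<in> agent_pairs n" for i j
  proof -
    have "exp (log_potential n l m p (c(i := s))) = exp (log_potential n l m p c)
        * exp (usd_weight l m p s - usd_weight l m p (c i))" for s
      using that by (simp add: agent_pairs_def log_potential_fun_upd exp_add[symmetric])
    then show ?thesis by (simp add: interaction_factor_def)
  qed
  have "measure_pmf.expectation (step n p c) (\<lambda>c'. exp (log_potential n l m p c')) =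
    (\<Sum>(i, j)\<in>agent_pairs n. measure_pmf.expectation (interact p (c i) (c j))
      (\<lambda>s. exp (log_potential n l m p (c(i := s)))) / real (card (agent_pairs n)))"
    unfolding step_def agent_pairs_def[symmetric]
    using assms agent_pairs_nonempty finite_agent_pairs
    by (subst pmf_expectation_bind_pmf_of_set)
      (auto simp: finite_set_pmf_interact case_prod_unfold divide_inverse_commute)
  also have "\<dots> = (\<Sum>(i, j)\<in>agent_pairs n. exp (log_potential n l m p c)
      * interaction_factor l m p (c i) (c j) / real (card (agent_pairs n)))"
    by (intro sum.cong) (auto simp: factor)
  finally show ?thesis
    by (simp add: sum_divide_distrib sum_distrib_left case_prod_unfold)
qed

lemma expectation_step_exp_log_potential_le:
  assumes n: "2 \<le> n" and p: "0 \<le> p" "p \<le> 1" and l: "0 < l" "l \<le> 1/5"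
    and bias: "9 * l * real n \<le> neg_wbias n p c"
  shows "measure_pmf.expectation (step n p c) (\<lambda>c'. exp (log_potential n l (5*l\<^sup>2) p c'))
    \<le> exp (log_potential n l (5*l\<^sup>2) p c)"
proof -
  define F where "F i j = interaction_factor l (5*l\<^sup>2) p (c i) (c j)" for i j
  define x1 x2 u where "x1 = real (cnt n Op1 c)" and "x2 = real (cnt n Op2 c)"
    and "u = real (cnt n Undec c)"
  have q: "0 \<le> 1 - p" "1 - p \<le> 1" using p by auto
  have "9 * l * (x1 + x2) \<le> 9 * l * real n"
    using l cnt_sum[of n c] by (simp add: x1_def x2_def u_def)
  also have "\<dots> \<le> (1 - p) * x2 - x1"
    using bias by (simp add: neg_wbias_def x1_def x2_def)
  finally have bias': "9 * l * (x1 + x2) \<le> (1 - p) * x2 - x1" .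
  have "x1 * x2 * ((exp (l * (1 - p) - 5*l\<^sup>2) - 1) + (1 - p) * (exp (- (5*l\<^sup>2) - l) - 1)) \<le> 0"
    using decided_drift_nonpos[OF q l] by (simp add: x1_def x2_def mult_nonneg_nonpos mult.commute)
  moreover have "u * (x1 * (exp (l + 5*l\<^sup>2) - 1) + x2 * (exp (5*l\<^sup>2 - l * (1 - p)) - 1)) \<le> 0"
    using undecided_drift_nonpos[OF q l _ _ bias'] by (simp add: x1_def x2_def u_def mult_nonneg_nonpos)
  ultimately have "(\<Sum>(i, j)\<in>agent_pairs n. F i j - 1) \<le> 0"
    unfolding F_def sum_agent_pairs_interaction_factor[OF p] x1_def x2_def u_def by linarith
  then have "(\<Sum>(i, j)\<in>agent_pairs n. F i j) \<le> real (card (agent_pairs n))"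
    by (simp add: sum_subtractf case_prod_unfold)
  moreover have "0 < real (card (agent_pairs n))"
    using finite_agent_pairs agent_pairs_nonempty[OF n] by (simp add: card_gt_0_iff)
  ultimately show ?thesis
    unfolding expectation_step_exp_log_potential[OF n] F_def
    by (simp add: mult_le_cancel_left1 pos_divide_le_eq)
qed

lemma traj_eq_chain_path: "traj n p c k = chain_path (step n p) c k"
  by (induction k) simp_all

lemma prob_traj_neg_wbias_stays_ge:
  assumes n: "2 \<le> n" and p: "0 \<le> p" "p \<le> 1" and l: "0 < l" "l \<le> 1/5"
    and d: "9 * l * real n \<le> d"
  shows "1 - exp (log_potential n l (5*l\<^sup>2) p x0 + l * d + 5*l\<^sup>2 * real n)
    \<le> measure_pmf.prob (traj n p x0 \<tau>) {xs. \<forall>t\<le>\<tau>. d \<le> neg_wbias n p (xs ! t)}"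
proof -
  define \<Phi> where "\<Phi> c = exp (log_potential n l (5*l\<^sup>2) p c)" for c
  define B where "B = exp (- l * d - 5*l\<^sup>2 * real n)"
  have "1 - \<Phi> x0 / B \<le> measure_pmf.prob (chain_path (step n p) x0 \<tau>)
      {xs. \<forall>t\<le>\<tau>. d \<le> neg_wbias n p (xs ! t)}"
  proof (rule prob_chain_path_stays_ge[where G = "\<lambda>c. d \<le> neg_wbias n p c"])
    show "finite (set_pmf (step n p c))" for c
      using n by (rule finite_set_pmf_step)
    show "measure_pmf.expectation (step n p c) \<Phi> \<le> \<Phi> c" if "d \<le> neg_wbias n p c" for c
      unfolding \<Phi>_def using d that by (intro expectation_step_exp_log_potential_le[OF n p l]) simp
    show "B \<le> \<Phi> c" if "\<not> d \<le> neg_wbias n p c" for c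
    proof -
      have "l * neg_wbias n p c \<le> l * d" using that l by simp
      moreover have "5*l\<^sup>2 * real (cnt n Undec c) \<le> 5*l\<^sup>2 * real n"
        using cnt_le by (intro mult_left_mono) auto
      ultimately show ?thesis by (simp add: B_def \<Phi>_def log_potential_eq)
    qed
  qed (simp_all add: B_def \<Phi>_def)
  then show ?thesis
    by (simp add: traj_eq_chain_path \<Phi>_def B_def exp_diff[symmetric] algebra_simps)
qed

theorem lemma13:
  fixes p c_s :: real
  assumes "0 \<le> p" and "p \<le> 1" and "c_s > 0"
  shows "\<exists>n0::nat. \<forall>n\<ge>n0. \<forall>x0::config. \<forall>\<tau>::nat.
           neg_wbias n p x0 \<ge> c_s * real n \<longrightarrow>
           real \<tau> \<le> (neg_wbias n p x0)\<^sup>2 / (16 * ln (real n)) \<longrightarrow>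
           measure_pmf.prob (traj n p x0 \<tau>)
             {xs. \<forall>t\<le>\<tau>. neg_wbias n p (xs ! t) \<ge> neg_wbias n p x0 / 2}
             \<ge> 1 - real n powr (-6)"
proof -
  define l where "l = min (1/5) (c_s / 18)"
  define k where "k = l * c_s / 2 - 5 * l\<^sup>2"
  have l: "0 < l" "l \<le> 1/5" "18 * l \<le> c_s" using assms(3) by (auto simp: l_def)
  have "5 * l\<^sup>2 \<le> l * c_s * (5/18)" using l by (simp add: power2_eq_square)
  moreover have "0 < l * c_s" using l assms(3) by simp
  ultimately have "0 < k" unfolding k_def by linarith
  then have "eventually (\<lambda>n. exp (- k * real n) \<le> real n powr (-6)) sequentially"
    by real_asymp
  then obtain n0 where n0: "\<And>n. n0 \<le> n \<Longrightarrow> exp (- k * real n) \<le> real n powr (-6)"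
    by (auto simp: eventually_sequentially)
  show ?thesis
  proof (intro exI[of _ "max 2 n0"] allI impI)
    \<comment> \<open>The estimate holds for every horizon.\<close>
    fix n x0 \<tau>
    assume n: "max 2 n0 \<le> n" and bias: "c_s * real n \<le> neg_wbias n p x0"
    define D where "D = neg_wbias n p x0"
    have "18 * l * real n \<le> D"
      using mult_right_mono[OF l(3), of "real n"] bias by (simp add: D_def)
    then have "1 - exp (log_potential n l (5*l\<^sup>2) p x0 + l * (D/2) + 5*l\<^sup>2 * real n)
        \<le> measure_pmf.prob (traj n p x0 \<tau>) {xs. \<forall>t\<le>\<tau>. D/2 \<le> neg_wbias n p (xs ! t)}"
      using n by (intro prob_traj_neg_wbias_stays_ge assms(1,2) l(1,2)) auto
    moreover have "log_potential n l (5*l\<^sup>2) p x0 + l * (D/2) + 5*l\<^sup>2 * real n \<le> - k * real n"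
    proof -
      have "log_potential n l (5*l\<^sup>2) p x0 \<le> - l * D"
        by (simp add: log_potential_eq D_def)
      moreover have "l * (c_s * real n) \<le> l * D"
        using bias l by (intro mult_left_mono) (auto simp: D_def)
      ultimately show ?thesis by (simp add: k_def algebra_simps)
    qed
    moreover have "exp (- k * real n) \<le> real n powr (-6)" using n n0 by simp
    ultimately have "1 - real n powr (-6)
        \<le> measure_pmf.prob (traj n p x0 \<tau>) {xs. \<forall>t\<le>\<tau>. D/2 \<le> neg_wbias n p (xs ! t)}"
      by (meson exp_le_cancel_iff diff_left_mono order_trans)
    then show "1 - real n powr (-6) \<le> measure_pmf.prob (traj n p x0 \<tau>)
        {xs. \<forall>t\<le>\<tau>. neg_wbias n p x0 / 2 \<le> neg_wbias n p (xs ! t)}"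
      by (simp add: D_def)
  qed
qed

end
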